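(* If a typing environment $\Gamma$ is live and $\Gamma\to\Gamma'$, then $\Gamma'$ is live.
   Context: Sorts: $\mathsf{S} ::= \mathtt{nat} \mid \mathtt{int} \mid \mathtt{bool} \mid \mathtt{unit}$; subsorting $\leq:$ is the least reflexive relation on sorts with $\mathtt{nat}\leq:\mathtt{int}$. Session types: $\mathbb{T} ::= \&_{i\in I}\mathsf{p}?\ell_i(\mathsf{S}_i).\mathbb{T}_i \mid \oplus_{i\in I}\mathsf{p}!\ell_i(\mathsf{S}_i).\mathbb{T}_i \mid \mathtt{end} \mid \mu\mathbf{t}.\mathbb{T} \mid \mathbf{t}$ ($I$ finite nonempty, distinct labels, guarded recursion, closed types); $\equiv$ on types is the least congruence with $\mu\mathbf{t}.\mathbb{T}\equiv\mathbb{T}\{\mu\mathbf{t}.\mathbb{T}/\mathbf{t}\}$. Queue types $\sigma ::= \epsilon \mid \mathsf{p}!\ell(\mathsf{S}) \mid \sigma\cdot\sigma$, with $\equiv$ the least congruence making $\cdot$ associative with unit $\epsilon$ and swapping adjacent messages $\mathsf{p}_1!\ell_1(\mathsf{S}_1)\cdot\mathsf{p}_2!\ell_2(\mathsf{S}_2)$ when $\mathsf{p}_1\neq\mathsf{p}_2$. A typing environment $\Gamma$ is a finite map from participants to pairs $(\sigma,\mathbb{T})$. $(\sigma_1,\mathbb{T}_1)\equiv(\sigma_2,\mathbb{T}_2)$ iff both components are $\equiv$; $\Gamma\equiv\Gamma'$ iff entries of common participants are $\equiv$ and entries of participants in only one domain are $\equiv(\epsilon,\mathtt{end})$. Reductions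 $\Gamma\xrightarrow{\alpha}\Gamma'$: (e-rcv) $\mathsf{p}{:}(\mathsf{q}!\ell_k(\mathsf{S}'_k)\cdot\sigma,\mathbb{T}_\mathsf{p}),\mathsf{q}{:}(\sigma_\mathsf{q},\&_{i\in I}\mathsf{p}?\ell_i(\mathsf{S}_i).\mathbb{T}_i),\Gamma\xrightarrow{\mathsf{q}:\mathsf{p}?\ell_k}\mathsf{p}{:}(\sigma,\mathbb{T}_\mathsf{p}),\mathsf{q}{:}(\sigma_\mathsf{q},\mathbb{T}_k),\Gamma$ if $k\in I$ and $\mathsf{S}'_k\leq:\mathsf{S}_k$; (e-send) $\mathsf{p}{:}(\sigma,\oplus_{i\in I}\mathsf{q}!\ell_i(\mathsf{S}_i).\mathbb{T}_i),\Gamma\xrightarrow{\mathsf{p}:\mathsf{q}!\ell_k}\mathsf{p}{:}(\sigma\cdot\mathsf{q}!\ell_k(\mathsf{S}_k),\mathbb{T}_k),\Gamma$ if $k\in I$; (e-struct) $\Gamma\equiv\Gamma_1\xrightarrow{\alpha}\Gamma_1'\equiv\Gamma'$ implies $\Gamma\xrightarrow{\alpha}\Gamma'$. $\Gamma\to\Gamma'$ means $\Gamma\xrightarrow{\alpha}\Gamma'$ for some $\alpha$. A path is a finite or infinite sequence $(\Gamma_i)_{i\in I}$ ($I=\{0,1,\dots\}$ consecutive naturals) with $\Gamma_i\to\Gamma_{i+1}$ whenever $i+1\in I$. Fair: for all $i\in I$, (F1) if $\Gamma_i\xrightarrow{\mathsf{p}:\mathsf{q}!\ell}\Gamma'$ for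 some $\Gamma'$ then $\Gamma_k\xrightarrow{\mathsf{p}:\mathsf{q}!\ell'}\Gamma_{k+1}$ for some $k\geq i$ with $k+1\in I$ and some $\ell'$; (F2) if $\Gamma_i\xrightarrow{\mathsf{p}:\mathsf{q}?\ell}\Gamma'$ for some $\Gamma'$ then $\Gamma_k\xrightarrow{\mathsf{p}:\mathsf{q}?\ell}\Gamma_{k+1}$ for some $k\geq i$ with $k+1\in I$. Live: for all $i\in I$, (L1) if $\Gamma_i(\mathsf{p})\equiv(\mathsf{q}!\ell(\mathsf{S})\cdot\sigma,\mathbb{T})$ then $\Gamma_k\xrightarrow{\mathsf{q}:\mathsf{p}?\ell}\Gamma_{k+1}$ for some $k\geq i$ with $k+1\in I$; (L2) if $\Gamma_i(\mathsf{p})\equiv(\sigma_\mathsf{p},\&_{j\in J}\mathsf{q}?\ell_j(\mathsf{S}_j).\mathbb{T}_j)$ then $\Gamma_k\xrightarrow{\mathsf{p}:\mathsf{q}?\ell'}\Gamma_{k+1}$ for some $k\geq i$ with $k+1\in I$ and some $\ell'$. $\Gamma$ is live iff every fair path with $\Gamma_0=\Gamma$ is live. *)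

theory Defs
  imports Main "HOL-Library.Finite_Map" "HOL-Library.Extended_Nat"
begin

datatype sort = SNat | SInt | SBool | SUnit

definition subsort :: "sort \<Rightarrow> sort \<Rightarrow> bool" where
  "subsort S S' \<longleftrightarrow> S = S' \<or> (S = SNat \<and> S' = SInt)"

section \<open>Session types (recursion variables as de Bruijn indices)\<close>

text \<open>Branching/selection is a finite map from labels to (sort, continuation);
  this makes labels distinct and ignores the order of the index set I.\<close>

datatype ('p, 'l) stype =
    Bra 'p "('l, sort \<times> ('p, 'l) stype) fmap"   (* &_{i} p?l_i(S_i).T_i *)
  | Sel 'p "('l, sort \<times> ('p, 'l) stype) fmap"   (* (+)_{i} p!l_i(S_i).T_i *)
  | End
  | Mu "('p, 'l) stype"
  | TVar nat

primrec lift :: "nat \<Rightarrow> ('p, 'l) stype \<Rightarrow> ('p, 'l) stype" where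
  "lift k (Bra p m) = Bra p (fmmap (map_prod id (lift k)) m)"
| "lift k (Sel p m) = Sel p (fmmap (map_prod id (lift k)) m)"
| "lift k End = End"
| "lift k (Mu T) = Mu (lift (Suc k) T)"
| "lift k (TVar n) = (if n < k then TVar n else TVar (Suc n))"

primrec subst :: "nat \<Rightarrow> ('p, 'l) stype \<Rightarrow> ('p, 'l) stype \<Rightarrow> ('p, 'l) stype" where
  "subst k U (Bra p m) = Bra p (fmmap (map_prod id (subst k U)) m)"
| "subst k U (Sel p m) = Sel p (fmmap (map_prod id (subst k U)) m)"
| "subst k U End = End"
| "subst k U (Mu T) = Mu (subst (Suc k) (lift 0 U) T)"
| "subst k U (TVar n) = (if n = k then U else if k < n then TVar (n - 1) else TVar n)"

primrec unguarded :: "('p, 'l) stype \<Rightarrow> nat set" where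
  "unguarded (Bra p m) = {}"
| "unguarded (Sel p m) = {}"
| "unguarded End = {}"
| "unguarded (Mu T) = {n. Suc n \<in> unguarded T}"
| "unguarded (TVar n) = {n}"

inductive wf_type :: "nat \<Rightarrow> ('p, 'l) stype \<Rightarrow> bool" where
  wf_bra: "fmdom' m \<noteq> {} \<Longrightarrow> (\<forall>x\<in>fmran' m. wf_type k (snd x)) \<Longrightarrow> wf_type k (Bra p m)"
| wf_sel: "fmdom' m \<noteq> {} \<Longrightarrow> (\<forall>x\<in>fmran' m. wf_type k (snd x)) \<Longrightarrow> wf_type k (Sel p m)"
| wf_end: "wf_type k End"
| wf_mu: "0 \<notin> unguarded T \<Longrightarrow> wf_type (Suc k) T \<Longrightarrow> wf_type k (Mu T)"
| wf_var: "n < k \<Longrightarrow> wf_type k (TVar n)"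

abbreviation session_type :: "('p, 'l) stype \<Rightarrow> bool" where
  "session_type T \<equiv> wf_type 0 T"

inductive teq :: "('p, 'l) stype \<Rightarrow> ('p, 'l) stype \<Rightarrow> bool" where
  teq_refl: "teq T T"
| teq_sym: "teq T U \<Longrightarrow> teq U T"
| teq_trans: "teq T U \<Longrightarrow> teq U V \<Longrightarrow> teq T V"
| teq_unfold: "teq (Mu T) (subst 0 (Mu T) T)"
| teq_mu: "teq T U \<Longrightarrow> teq (Mu T) (Mu U)"
| teq_bra: "fmdom' m = fmdom' m' \<Longrightarrow>
    (\<forall>l S T S' T'. fmlookup m l = Some (S, T) \<longrightarrow> fmlookup m' l = Some (S', T') \<longrightarrow> S = S' \<and> teq T T')
    \<Longrightarrow> teq (Bra p m) (Bra p m')"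
| teq_sel: "fmdom' m = fmdom' m' \<Longrightarrow>
    (\<forall>l S T S' T'. fmlookup m l = Some (S, T) \<longrightarrow> fmlookup m' l = Some (S', T') \<longrightarrow> S = S' \<and> teq T T')
    \<Longrightarrow> teq (Sel p m) (Sel p m')"

text \<open>A queue type is a list of messages (recipient, label, sort); the empty list is
  epsilon and concatenation is append (so associativity/unit hold definitionally).\<close>
type_synonym ('p, 'l) queue = "('p \<times> 'l \<times> sort) list"

inductive qeq :: "('p, 'l) queue \<Rightarrow> ('p, 'l) queue \<Rightarrow> bool" where
  qeq_refl: "qeq s s"
| qeq_sym: "qeq s t \<Longrightarrow> qeq t s"
| qeq_trans: "qeq s t \<Longrightarrow> qeq t u \<Longrightarrow> qeq s u"
| qeq_swap: "fst m1 \<noteq> fst m2 \<Longrightarrow> qeq (xs @ [m1, m2] @ ys) (xs @ [m2, m1] @ ys)"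

type_synonym ('p, 'l) entry = "('p, 'l) queue \<times> ('p, 'l) stype"
type_synonym ('p, 'l) env = "('p, ('p, 'l) entry) fmap"

definition eeq :: "('p, 'l) entry \<Rightarrow> ('p, 'l) entry \<Rightarrow> bool" where
  "eeq e e' \<longleftrightarrow> qeq (fst e) (fst e') \<and> teq (snd e) (snd e')"

definition envequiv :: "('p, 'l) env \<Rightarrow> ('p, 'l) env \<Rightarrow> bool" where
  "envequiv G G' \<longleftrightarrow> (\<forall>p. case (fmlookup G p, fmlookup G' p) of
      (Some e, Some e') \<Rightarrow> eeq e e'
    | (Some e, None) \<Rightarrow> eeq e ([], End)
    | (None, Some e') \<Rightarrow> eeq e' ([], End)
    | (None, None) \<Rightarrow> True)"

definition wf_env :: "('p, 'l) env \<Rightarrow> bool" where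
  "wf_env G \<longleftrightarrow> (\<forall>e\<in>fmran' G. session_type (snd e))"

datatype ('p, 'l) act =
    ARcv 'p 'p 'l   (* ARcv q p l  =  q:p?l *)
  | ASnd 'p 'p 'l   (* ASnd p q l  =  p:q!l *)

inductive red :: "('p, 'l) env \<Rightarrow> ('p, 'l) act \<Rightarrow> ('p, 'l) env \<Rightarrow> bool" where
  e_rcv: "\<lbrakk> wf_env G; p \<noteq> q;
            fmlookup G p = Some ((q, l, S') # \<sigma>, Tp);
            fmlookup G q = Some (\<sigma>q, Bra p m);
            fmlookup m l = Some (S, T); subsort S' S \<rbrakk>
     \<Longrightarrow> red G (ARcv q p l) (fmupd q (\<sigma>q, T) (fmupd p (\<sigma>, Tp) G))"
| e_send: "\<lbrakk> wf_env G; fmlookup G p = Some (\<sigma>, Sel q m); fmlookup m l = Some (S, T) \<rbrakk>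
     \<Longrightarrow> red G (ASnd p q l) (fmupd p (\<sigma> @ [(q, l, S)], T) G)"
| e_struct: "\<lbrakk> wf_env G; wf_env G'; envequiv G G1; red G1 a G1'; envequiv G1' G' \<rbrakk>
     \<Longrightarrow> red G a G'"

definition red_any :: "('p, 'l) env \<Rightarrow> ('p, 'l) env \<Rightarrow> bool" where
  "red_any G G' \<longleftrightarrow> (\<exists>a. red G a G')"

text \<open>A path is a sequence Gs indexed by {i. enat i < n}, with n \<in> {1,2,...,\<infinity>}.\<close>
definition is_path :: "(nat \<Rightarrow> ('p, 'l) env) \<Rightarrow> enat \<Rightarrow> bool" where
  "is_path Gs n \<longleftrightarrow> n \<noteq> 0 \<and> (\<forall>i. enat (Suc i) < n \<longrightarrow> red_any (Gs i) (Gs (Suc i)))"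

definition fair_path :: "(nat \<Rightarrow> ('p, 'l) env) \<Rightarrow> enat \<Rightarrow> bool" where
  "fair_path Gs n \<longleftrightarrow> (\<forall>i. enat i < n \<longrightarrow>
     (\<forall>p q l G'. red (Gs i) (ASnd p q l) G' \<longrightarrow>
        (\<exists>k\<ge>i. enat (Suc k) < n \<and> (\<exists>l'. red (Gs k) (ASnd p q l') (Gs (Suc k))))) \<and>
     (\<forall>p q l G'. red (Gs i) (ARcv p q l) G' \<longrightarrow>
        (\<exists>k\<ge>i. enat (Suc k) < n \<and> red (Gs k) (ARcv p q l) (Gs (Suc k)))))"

definition live_path :: "(nat \<Rightarrow> ('p, 'l) env) \<Rightarrow> enat \<Rightarrow> bool" where
  "live_path Gs n \<longleftrightarrow> (\<forall>i. enat i < n \<longrightarrow>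
     (\<forall>p q l S \<sigma> T e. fmlookup (Gs i) p = Some e \<longrightarrow> eeq e ((q, l, S) # \<sigma>, T) \<longrightarrow>
        (\<exists>k\<ge>i. enat (Suc k) < n \<and> red (Gs k) (ARcv q p l) (Gs (Suc k)))) \<and>
     (\<forall>p q \<sigma> m e. fmlookup (Gs i) p = Some e \<longrightarrow> eeq e (\<sigma>, Bra q m) \<longrightarrow> fmdom' m \<noteq> {} \<longrightarrow>
        (\<exists>k\<ge>i. enat (Suc k) < n \<and> (\<exists>l'. red (Gs k) (ARcv p q l') (Gs (Suc k))))))"

definition live :: "('p, 'l) env \<Rightarrow> bool" where
  "live G \<longleftrightarrow> (\<forall>Gs n. is_path Gs n \<longrightarrow> Gs 0 = G \<longrightarrow> fair_path Gs n \<longrightarrow> live_path Gs n)"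

end

(* Given a fair path from G' with G -> G', prepend G. The result is a path from G, and it is
   fair: a communication enabled in G is either the one performed by the first step, or it is
   still enabled in G' (a reduction of other participants or channels cannot disable it), so
   fairness of the original path performs it later. Liveness of G then makes the extended path
   live, and liveness of a path is inherited by its tail.

   That reductions do not disable each other rests on type equivalence preserving the top-level
   prefix of a session type, and on queue equivalence preserving, for each recipient, the
   subsequence of messages addressed to it. *)

theory Submission
  imports Defs
begin

text \<open>The top-level prefix of a type after unfolding recursion; r gives the heads of the free
  de Bruijn variables, and a recursion variable in unguarded position has none (HNone).\<close>

datatype 'p head = HSel 'p | HBra 'p | HEnd | HNone

primrec type_head :: "(nat \<Rightarrow> 'p head) \<Rightarrow> ('p, 'l) stype \<Rightarrow> 'p head" where
  "type_head r (Bra p m) = HBra p"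
| "type_head r (Sel p m) = HSel p"
| "type_head r End = HEnd"
| "type_head r (Mu T) = type_head (case_nat HNone r) T"
| "type_head r (TVar n) = r n"

lemma type_head_lift:
  "type_head r (lift k U) = type_head (\<lambda>n. if n < k then r n else r (Suc n)) U"
proof (induction U arbitrary: k r)
  case (Mu U)
  have "case_nat HNone (\<lambda>n. if n < k then r n else r (Suc n)) =
        (\<lambda>n. if n < Suc k then case_nat HNone r n else case_nat HNone r (Suc n))"
    by (auto split: nat.splits)
  then show ?case using Mu by simp
qed auto

lemma type_head_subst:
  "type_head r (subst k U T) =
   type_head (\<lambda>n. if n < k then r n else if n = k then type_head r U else r (n - 1)) T"
proof (induction T arbitrary: k U r)
  case (Mu T)
  have lifted: "type_head (case_nat HNone r) (lift 0 U) = type_head r U"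
    by (simp add: type_head_lift)
  have env: "(\<lambda>n. if n < Suc k then case_nat HNone r n
                      else if n = Suc k then type_head r U else case_nat HNone r (n - 1))
      = case_nat HNone (\<lambda>n. if n < k then r n else if n = k then type_head r U else r (n - 1))"
    by (auto split: nat.splits)
  show ?case by (simp only: subst.simps type_head.simps Mu.IH lifted env)
qed auto

lemma type_head_fun_upd:
  "(\<forall>x. type_head (r(k := x)) T = x) \<or> (\<forall>x. type_head (r(k := x)) T = type_head r T)"
proof (induction T arbitrary: k r)
  case (Mu T)
  have upd: "\<And>x. case_nat HNone (r(k := x)) = (case_nat HNone r)(Suc k := x)"
    by (auto split: nat.splits)
  show ?case using Mu.IH[of "case_nat HNone r" "Suc k"] by (simp only: type_head.simps upd)
qed auto

lemma type_head_unfold: "type_head r (subst 0 (Mu T) T) = type_head r (Mu T)"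
proof -
  let ?r = "case_nat HNone r"
  have "?r(0 := HNone) = ?r"
    by (auto split: nat.splits)
  then have fix_head: "type_head (?r(0 := type_head ?r T)) T = type_head ?r T"
    using type_head_fun_upd[of ?r 0 T] by metis
  have "(\<lambda>n. if n < 0 then r n else if n = 0 then type_head r (Mu T) else r (n - 1))
      = ?r(0 := type_head ?r T)"
    by (auto split: nat.splits)
  then show ?thesis
    by (simp add: type_head_subst fix_head)
qed

lemma teq_type_head: "teq T U \<Longrightarrow> type_head r T = type_head r U"
  by (induction arbitrary: r rule: teq.induct) (auto simp: type_head_unfold)

lemma teq_Sel_peer_unique: "teq T (Sel q m) \<Longrightarrow> teq T (Sel q' m') \<Longrightarrow> q = q'"
  using teq_type_head[of T "Sel q m" "\<lambda>_. HNone"] teq_type_head[of T "Sel q' m'" "\<lambda>_. HNone"] by simp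

lemma teq_Bra_peer_unique: "teq T (Bra q m) \<Longrightarrow> teq T (Bra q' m') \<Longrightarrow> q = q'"
  using teq_type_head[of T "Bra q m" "\<lambda>_. HNone"] teq_type_head[of T "Bra q' m'" "\<lambda>_. HNone"] by simp

lemma not_teq_Sel_Bra: "teq T (Sel q m) \<Longrightarrow> teq T (Bra q' m') \<Longrightarrow> False"
  using teq_type_head[of T "Sel q m" "\<lambda>_. HNone"] teq_type_head[of T "Bra q' m'" "\<lambda>_. HNone"] by simp

lemma qeq_filter_recipient: "qeq s t \<Longrightarrow> filter (\<lambda>x. fst x = r) s = filter (\<lambda>x. fst x = r) t"
  by (induction rule: qeq.induct) auto

lemma qeq_append_right: "qeq s t \<Longrightarrow> qeq (s @ c) (t @ c)"
proof (induction rule: qeq.induct)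
  case (qeq_swap m1 m2 xs ys)
  then show ?case using qeq.qeq_swap[of m1 m2 xs "ys @ c"] by simp
qed (auto intro: qeq.intros)

lemma qeq_append_left: "qeq s t \<Longrightarrow> qeq (c @ s) (c @ t)"
proof (induction rule: qeq.induct)
  case (qeq_swap m1 m2 xs ys)
  then show ?case using qeq.qeq_swap[of m1 m2 "c @ xs" ys] by simp
qed (auto intro: qeq.intros)

lemma qeq_move_to_front: "\<forall>x\<in>set xs. fst x \<noteq> fst m \<Longrightarrow> qeq (xs @ m # ys) (m # xs @ ys)"
proof (induction xs)
  case Nil
  then show ?case by (simp add: qeq_refl)
next
  case (Cons a xs)
  then have "qeq (a # xs @ m # ys) (a # m # xs @ ys)"
    using qeq_append_left[of _ _ "[a]"] by simp
  moreover have "qeq ([] @ [a, m] @ (xs @ ys)) ([] @ [m, a] @ (xs @ ys))"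
    using Cons.prems by (intro qeq_swap) auto
  ultimately show ?case using qeq_trans by simp blast
qed

definition entry_of :: "('p, 'l) env \<Rightarrow> 'p \<Rightarrow> ('p, 'l) entry" where
  "entry_of G p = (case fmlookup G p of None \<Rightarrow> ([], End) | Some e \<Rightarrow> e)"

lemma entry_of_Some [simp]: "fmlookup G p = Some e \<Longrightarrow> entry_of G p = e"
  by (simp add: entry_of_def)

lemma entry_of_fmupd [simp]: "entry_of (fmupd p e G) r = (if r = p then e else entry_of G r)"
  by (simp add: entry_of_def)

lemma eeq_refl [simp]: "eeq e e"
  by (simp add: eeq_def qeq_refl teq_refl)

lemma eeq_sym: "eeq e e' \<Longrightarrow> eeq e' e"
  by (auto simp: eeq_def intro: qeq_sym teq_sym)

lemma eeq_trans: "eeq e e' \<Longrightarrow> eeq e' e'' \<Longrightarrow> eeq e e''"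
  by (auto simp: eeq_def intro: qeq_trans teq_trans)

lemma envequiv_iff_entry_of: "envequiv G G' \<longleftrightarrow> (\<forall>p. eeq (entry_of G p) (entry_of G' p))"
  unfolding envequiv_def entry_of_def
  by (intro iff_allI, simp split: option.split) (metis eeq_sym)

lemma envequiv_refl [simp]: "envequiv G G"
  by (simp add: envequiv_iff_entry_of)

lemma envequiv_sym: "envequiv G G' \<Longrightarrow> envequiv G' G"
  by (simp add: envequiv_iff_entry_of eeq_sym)

lemma envequiv_trans: "envequiv G G' \<Longrightarrow> envequiv G' G'' \<Longrightarrow> envequiv G G''"
  unfolding envequiv_iff_entry_of by (blast intro: eeq_trans)

lemma envequiv_fmupd: "envequiv G G' \<Longrightarrow> eeq e e' \<Longrightarrow> envequiv (fmupd p e G) (fmupd p e' G')"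
  by (simp add: envequiv_iff_entry_of)

lemma wf_env_iff: "wf_env G \<longleftrightarrow> (\<forall>p e. fmlookup G p = Some e \<longrightarrow> session_type (snd e))"
  unfolding wf_env_def by (meson fmran'I fmran'E)

lemma wf_env_entry_of: "wf_env G \<Longrightarrow> session_type (snd (entry_of G p))"
  by (auto simp: wf_env_iff entry_of_def split: option.split intro: wf_end)

lemma wf_env_fmupd: "wf_env G \<Longrightarrow> session_type T \<Longrightarrow> wf_env (fmupd p (\<sigma>, T) G)"
  by (auto simp: wf_env_iff)

inductive_cases wf_type_SelE: "wf_type k (Sel p m)"
inductive_cases wf_type_BraE: "wf_type k (Bra p m)"

lemma wf_type_Sel_cont: "wf_type k (Sel q m) \<Longrightarrow> fmlookup m l = Some (S, T) \<Longrightarrow> wf_type k T"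
  by (erule wf_type_SelE) (force dest: fmran'I)

lemma wf_type_Bra_cont: "wf_type k (Bra q m) \<Longrightarrow> fmlookup m l = Some (S, T) \<Longrightarrow> wf_type k T"
  by (erule wf_type_BraE) (force dest: fmran'I)

lemma red_wf_env_source: "red G a G' \<Longrightarrow> wf_env G"
  by (cases rule: red.cases) auto

lemma red_wf_env_target: "red G a G' \<Longrightarrow> wf_env G'"
proof (induction rule: red.induct)
  case (e_rcv G p q l S' \<sigma> Tp \<sigma>q m S T)
  then have "session_type Tp" "session_type (Bra p m)"
    by (force simp: wf_env_iff)+
  with e_rcv show ?case
    by (simp add: wf_env_fmupd wf_type_Bra_cont)
next
  case (e_send G p \<sigma> q m l S T)
  then have "session_type (Sel q m)"
    by (force simp: wf_env_iff)
  with e_send show ?case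
    by (simp add: wf_env_fmupd wf_type_Sel_cont)
qed simp

lemma red_ASnd_inv:
  assumes "red G (ASnd p q l) G'"
  shows "\<exists>m S T. teq (snd (entry_of G p)) (Sel q m) \<and> session_type (Sel q m)
    \<and> fmlookup m l = Some (S, T) \<and> envequiv G' (fmupd p (fst (entry_of G p) @ [(q, l, S)], T) G)"
  using assms
proof (induction G "ASnd p q l" G' rule: red.induct)
  case (e_send G \<sigma> m S T)
  then have "session_type (Sel q m)"
    by (metis wf_env_iff snd_conv)
  with e_send show ?case
    by (intro exI[of _ m] exI[of _ S] exI[of _ T]) (simp add: teq_refl)
next
  case (e_struct G G' G1 G1')
  then obtain m S T where
    sel: "teq (snd (entry_of G1 p)) (Sel q m)" "session_type (Sel q m)" "fmlookup m l = Some (S, T)"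
    and reduct: "envequiv G1' (fmupd p (fst (entry_of G1 p) @ [(q, l, S)], T) G1)"
    by blast
  have e: "eeq (entry_of G1 p) (entry_of G p)"
    using e_struct.hyps(3) by (simp add: envequiv_iff_entry_of eeq_sym)
  then have "teq (snd (entry_of G p)) (Sel q m)"
    using sel(1) by (auto simp: eeq_def intro: teq_sym teq_trans)
  moreover have "envequiv G' (fmupd p (fst (entry_of G p) @ [(q, l, S)], T) G)"
  proof -
    have "eeq (fst (entry_of G1 p) @ [(q, l, S)], T) (fst (entry_of G p) @ [(q, l, S)], T)"
      using e by (simp add: eeq_def qeq_append_right teq_refl)
    then have "envequiv (fmupd p (fst (entry_of G1 p) @ [(q, l, S)], T) G1)
                        (fmupd p (fst (entry_of G p) @ [(q, l, S)], T) G)"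
      using e_struct.hyps(3) by (simp add: envequiv_fmupd envequiv_sym)
    then show ?thesis
      using e_struct.hyps(6) reduct by (meson envequiv_sym envequiv_trans)
  qed
  ultimately show ?case
    using sel by blast
qed

lemma red_ARcv_inv:
  assumes "red G (ARcv q p l) G'"
  shows "p \<noteq> q \<and> (\<exists>S' \<sigma> m S T. qeq (fst (entry_of G p)) ((q, l, S') # \<sigma>)
    \<and> teq (snd (entry_of G q)) (Bra p m) \<and> session_type (Bra p m)
    \<and> fmlookup m l = Some (S, T) \<and> subsort S' S
    \<and> envequiv G' (fmupd q (fst (entry_of G q), T) (fmupd p (\<sigma>, snd (entry_of G p)) G)))"
  using assms
proof (induction G "ARcv q p l" G' rule: red.induct)
  case (e_rcv G S' \<sigma> Tp \<sigma>q m S T)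
  then have "session_type (Bra p m)"
    by (metis wf_env_iff snd_conv)
  with e_rcv show ?case
    by (intro conjI exI[of _ S'] exI[of _ \<sigma>] exI[of _ m] exI[of _ S] exI[of _ T])
      (simp_all add: teq_refl qeq_refl)
next
  case (e_struct G G' G1 G1')
  then obtain S' \<sigma> m S T where
    "p \<noteq> q" and rcv: "qeq (fst (entry_of G1 p)) ((q, l, S') # \<sigma>)"
      "teq (snd (entry_of G1 q)) (Bra p m)" "session_type (Bra p m)"
      "fmlookup m l = Some (S, T)" "subsort S' S"
    and reduct: "envequiv G1' (fmupd q (fst (entry_of G1 q), T) (fmupd p (\<sigma>, snd (entry_of G1 p)) G1))"
    by blast
  have e: "\<And>r. eeq (entry_of G1 r) (entry_of G r)"
    using e_struct.hyps(3) by (simp add: envequiv_iff_entry_of eeq_sym)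
  have "qeq (fst (entry_of G p)) ((q, l, S') # \<sigma>)"
    using e[of p] rcv(1) by (auto simp: eeq_def intro: qeq_sym qeq_trans)
  moreover have "teq (snd (entry_of G q)) (Bra p m)"
    using e[of q] rcv(2) by (auto simp: eeq_def intro: teq_sym teq_trans)
  moreover have "envequiv G' (fmupd q (fst (entry_of G q), T) (fmupd p (\<sigma>, snd (entry_of G p)) G))"
  proof -
    have "envequiv (fmupd q (fst (entry_of G1 q), T) (fmupd p (\<sigma>, snd (entry_of G1 p)) G1))
                   (fmupd q (fst (entry_of G q), T) (fmupd p (\<sigma>, snd (entry_of G p)) G))"
      using e_struct.hyps(3) e[of p] e[of q]
      by (intro envequiv_fmupd) (auto simp: eeq_def qeq_refl teq_refl envequiv_sym)
    then show ?thesis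
      using e_struct.hyps(6) reduct by (meson envequiv_sym envequiv_trans)
  qed
  ultimately show ?case
    using \<open>p \<noteq> q\<close> rcv by blast
qed

definition send_enabled :: "('p, 'l) env \<Rightarrow> 'p \<Rightarrow> 'p \<Rightarrow> 'l \<Rightarrow> bool" where
  "send_enabled G p q l \<longleftrightarrow>
     (\<exists>m S T. teq (snd (entry_of G p)) (Sel q m) \<and> session_type (Sel q m) \<and> fmlookup m l = Some (S, T))"

text \<open>The message need not be at the front of the queue of p: the first one addressed to q
  can be moved there by queue equivalence.\<close>

definition recv_enabled :: "('p, 'l) env \<Rightarrow> 'p \<Rightarrow> 'p \<Rightarrow> 'l \<Rightarrow> bool" where
  "recv_enabled G q p l \<longleftrightarrow> q \<noteq> p \<and>
     (\<exists>S' rest m S T. filter (\<lambda>x. fst x = q) (fst (entry_of G p)) = (q, l, S') # rest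
        \<and> teq (snd (entry_of G q)) (Bra p m) \<and> session_type (Bra p m)
        \<and> fmlookup m l = Some (S, T) \<and> subsort S' S)"

lemma send_enabled_iff_red:
  assumes "wf_env G"
  shows "send_enabled G p q l \<longleftrightarrow> (\<exists>G'. red G (ASnd p q l) G')"
proof
  assume "send_enabled G p q l"
  then obtain m S T where
    sel: "teq (snd (entry_of G p)) (Sel q m)" "session_type (Sel q m)" "fmlookup m l = Some (S, T)"
    unfolding send_enabled_def by blast
  define G1 where "G1 = fmupd p (fst (entry_of G p), Sel q m) G"
  have "wf_env G1"
    unfolding G1_def using assms sel(2) by (rule wf_env_fmupd)
  then have step: "red G1 (ASnd p q l) (fmupd p (fst (entry_of G p) @ [(q, l, S)], T) G1)"
    by (rule e_send[OF _ _ sel(3)]) (simp add: G1_def)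
  have "envequiv G G1"
    using sel(1) by (simp add: G1_def envequiv_iff_entry_of eeq_def qeq_refl teq_refl teq_sym)
  with assms step show "\<exists>G'. red G (ASnd p q l) G'"
    by (blast intro: e_struct red_wf_env_target envequiv_refl)
next
  assume "\<exists>G'. red G (ASnd p q l) G'"
  then show "send_enabled G p q l"
    unfolding send_enabled_def by (blast dest: red_ASnd_inv)
qed

lemma recv_enabled_iff_red:
  assumes "wf_env G"
  shows "recv_enabled G q p l \<longleftrightarrow> (\<exists>G'. red G (ARcv q p l) G')"
proof
  assume "recv_enabled G q p l"
  then obtain S' rest m S T where
    "q \<noteq> p" and first: "filter (\<lambda>x. fst x = q) (fst (entry_of G p)) = (q, l, S') # rest"
    and bra: "teq (snd (entry_of G q)) (Bra p m)" "session_type (Bra p m)"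
      "fmlookup m l = Some (S, T)" "subsort S' S"
    unfolding recv_enabled_def by blast
  from first obtain us vs where
    "fst (entry_of G p) = us @ (q, l, S') # vs" and "\<forall>u\<in>set us. fst u \<noteq> q"
    by (auto simp: filter_eq_Cons_iff)
  then have front: "qeq (fst (entry_of G p)) ((q, l, S') # us @ vs)"
    using qeq_move_to_front[of us "(q, l, S')" vs] by simp
  define G1 where
    "G1 = fmupd q (fst (entry_of G q), Bra p m) (fmupd p ((q, l, S') # us @ vs, snd (entry_of G p)) G)"
  have "wf_env G1"
    unfolding G1_def using assms bra(2) by (intro wf_env_fmupd wf_env_entry_of)
  then have step: "red G1 (ARcv q p l)
      (fmupd q (fst (entry_of G q), T) (fmupd p (us @ vs, snd (entry_of G p)) G1))"
    using \<open>q \<noteq> p\<close> by (intro e_rcv[OF _ _ _ _ bra(3,4)]) (simp_all add: G1_def)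
  have "envequiv G G1"
    using \<open>q \<noteq> p\<close> front bra(1)
    by (simp add: G1_def envequiv_iff_entry_of eeq_def qeq_refl teq_refl teq_sym)
  with assms step show "\<exists>G'. red G (ARcv q p l) G'"
    by (blast intro: e_struct red_wf_env_target envequiv_refl)
next
  assume "\<exists>G'. red G (ARcv q p l) G'"
  then obtain G' where "red G (ARcv q p l) G'" ..
  from red_ARcv_inv[OF this] obtain S' \<sigma> m S T where
    "p \<noteq> q" "qeq (fst (entry_of G p)) ((q, l, S') # \<sigma>)" "teq (snd (entry_of G q)) (Bra p m)"
    "session_type (Bra p m)" "fmlookup m l = Some (S, T)" "subsort S' S"
    by blast
  then show "recv_enabled G q p l"
    unfolding recv_enabled_def using qeq_filter_recipient[of _ _ q] by fastforce
qed

lemma send_enabled_envequiv: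
  assumes "envequiv G G'" and "send_enabled G p q l"
  shows "send_enabled G' p q l"
proof -
  have "teq (snd (entry_of G' p)) (snd (entry_of G p))"
    using assms(1) by (simp add: envequiv_iff_entry_of eeq_def teq_sym)
  with assms(2) show ?thesis
    unfolding send_enabled_def by (blast intro: teq_trans)
qed

lemma recv_enabled_envequiv:
  assumes "envequiv G G'" and "recv_enabled G q p l"
  shows "recv_enabled G' q p l"
proof -
  have "eeq (entry_of G p) (entry_of G' p)" and "eeq (entry_of G q) (entry_of G' q)"
    using assms(1) by (simp_all add: envequiv_iff_entry_of)
  then have "teq (snd (entry_of G' q)) (snd (entry_of G q))"
    and "filter (\<lambda>x. fst x = q) (fst (entry_of G' p)) = filter (\<lambda>x. fst x = q) (fst (entry_of G p))"
    using qeq_filter_recipient[of "fst (entry_of G p)" "fst (entry_of G' p)" q]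
    by (simp_all add: eeq_def teq_sym)
  with assms(2) show ?thesis
    unfolding recv_enabled_def by (metis teq_trans)
qed

lemma send_enabled_same_type:
  "snd (entry_of H p) = snd (entry_of G p) \<Longrightarrow> send_enabled H p q l = send_enabled G p q l"
  by (simp add: send_enabled_def)

lemma recv_enabled_queue_extend:
  assumes "recv_enabled G q p l" and "snd (entry_of H q) = snd (entry_of G q)"
    and "filter (\<lambda>x. fst x = q) (fst (entry_of H p)) = filter (\<lambda>x. fst x = q) (fst (entry_of G p)) @ c"
  shows "recv_enabled H q p l"
  using assms unfolding recv_enabled_def by fastforce

lemma send_enabled_persists:
  assumes step: "red G a G'" and enabled: "send_enabled G p q l" and other: "\<forall>l'. a \<noteq> ASnd p q l'"
  shows "send_enabled G' p q l"
proof -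
  from enabled obtain m S T where sel: "teq (snd (entry_of G p)) (Sel q m)"
    unfolding send_enabled_def by blast
  obtain H where "envequiv H G'" and "snd (entry_of H p) = snd (entry_of G p)"
  proof (cases a)
    case (ASnd s r l')
    from red_ASnd_inv[OF step[unfolded ASnd]] obtain m' S' T' where
      sel': "teq (snd (entry_of G s)) (Sel r m')"
      and reduct: "envequiv G' (fmupd s (fst (entry_of G s) @ [(r, l', S')], T') G)"
      by blast
    have "s \<noteq> p"
    proof
      assume "s = p"
      with sel sel' have "r = q"
        using teq_Sel_peer_unique by metis
      with \<open>s = p\<close> ASnd other show False
        by simp
    qed
    then show ?thesis
      by (intro that[OF envequiv_sym[OF reduct]]) simp
  next
    case (ARcv r s l')
    from red_ARcv_inv[OF step[unfolded ARcv]] obtain \<sigma> m' T' where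
      bra': "teq (snd (entry_of G r)) (Bra s m')"
      and reduct: "envequiv G' (fmupd r (fst (entry_of G r), T') (fmupd s (\<sigma>, snd (entry_of G s)) G))"
      by blast
    have "r \<noteq> p"
      using not_teq_Sel_Bra sel bra' by metis
    then show ?thesis
      by (intro that[OF envequiv_sym[OF reduct]]) simp
  qed
  with enabled have "send_enabled H p q l"
    using send_enabled_same_type[of H p G q l] by simp
  with \<open>envequiv H G'\<close> show ?thesis
    by (rule send_enabled_envequiv)
qed

lemma recv_enabled_persists:
  assumes step: "red G a G'" and enabled: "recv_enabled G q p l" and other: "a \<noteq> ARcv q p l"
  shows "recv_enabled G' q p l"
proof -
  let ?to_q = "filter (\<lambda>x. fst x = q)"
  from enabled obtain S' rest m where first: "?to_q (fst (entry_of G p)) = (q, l, S') # rest"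
    and bra: "teq (snd (entry_of G q)) (Bra p m)"
    unfolding recv_enabled_def by blast
  obtain H c where equiv: "envequiv H G'" and type: "snd (entry_of H q) = snd (entry_of G q)"
    and queue: "?to_q (fst (entry_of H p)) = ?to_q (fst (entry_of G p)) @ c"
  proof (cases a)
    case (ASnd s r l')
    from red_ASnd_inv[OF step[unfolded ASnd]] obtain m' S'' T' where
      sel': "teq (snd (entry_of G s)) (Sel r m')"
      and reduct: "envequiv G' (fmupd s (fst (entry_of G s) @ [(r, l', S'')], T') G)"
      by blast
    have "s \<noteq> q"
      using not_teq_Sel_Bra sel' bra by metis
    then show ?thesis
      by (intro that[OF envequiv_sym[OF reduct], of "if s = p then ?to_q [(r, l', S'')] else []"]) auto
  next
    case (ARcv r s l')
    from red_ARcv_inv[OF step[unfolded ARcv]] obtain S'' \<sigma> m' T' where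
      popped: "qeq (fst (entry_of G s)) ((r, l', S'') # \<sigma>)"
      and bra': "teq (snd (entry_of G r)) (Bra s m')"
      and reduct: "envequiv G' (fmupd r (fst (entry_of G r), T') (fmupd s (\<sigma>, snd (entry_of G s)) G))"
      by blast
    have "r \<noteq> q"
    proof
      assume "r = q"
      with bra bra' have "s = p"
        using teq_Bra_peer_unique by metis
      with \<open>r = q\<close> first have "l' = l"
        using qeq_filter_recipient[OF popped, of q] by simp
      with \<open>r = q\<close> \<open>s = p\<close> ARcv other show False
        by simp
    qed
    then have "?to_q \<sigma> = ?to_q (fst (entry_of G s))"
      using qeq_filter_recipient[OF popped, of q] by simp
    with \<open>r \<noteq> q\<close> show ?thesis
      by (intro that[OF envequiv_sym[OF reduct], of "[]"]) auto
  qed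
  have "recv_enabled H q p l"
    using enabled type queue by (rule recv_enabled_queue_extend)
  with equiv show ?thesis
    by (rule recv_enabled_envequiv)
qed

definition eventually_step :: "(nat \<Rightarrow> 'a) \<Rightarrow> enat \<Rightarrow> nat \<Rightarrow> ('a \<Rightarrow> 'a \<Rightarrow> bool) \<Rightarrow> bool" where
  "eventually_step Gs n i P \<longleftrightarrow> (\<exists>k\<ge>i. enat (Suc k) < n \<and> P (Gs k) (Gs (Suc k)))"

lemma eventually_step_prepend_Suc [simp]:
  "eventually_step (case_nat G Gs) (eSuc n) (Suc i) P \<longleftrightarrow> eventually_step Gs n i P"
proof
  assume "eventually_step (case_nat G Gs) (eSuc n) (Suc i) P"
  then obtain k where "Suc i \<le> k" "enat (Suc k) < eSuc n" "P (case_nat G Gs k) (case_nat G Gs (Suc k))"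
    unfolding eventually_step_def by blast
  then show "eventually_step Gs n i P"
    unfolding eventually_step_def
    by (intro exI[of _ "k - 1"]) (auto simp: Suc_ile_eq split: nat.splits)
next
  assume "eventually_step Gs n i P"
  then show "eventually_step (case_nat G Gs) (eSuc n) (Suc i) P"
    unfolding eventually_step_def by (force simp: Suc_ile_eq)
qed

lemma eventually_step_prepend_0:
  assumes "n \<noteq> 0"
  shows "eventually_step (case_nat G Gs) (eSuc n) 0 P \<longleftrightarrow> P G (Gs 0) \<or> eventually_step Gs n 0 P"
proof -
  have "eventually_step (case_nat G Gs) (eSuc n) 0 P \<longleftrightarrow>
        P G (Gs 0) \<or> eventually_step (case_nat G Gs) (eSuc n) (Suc 0) P"
  proof
    assume "eventually_step (case_nat G Gs) (eSuc n) 0 P"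
    then obtain k where "enat (Suc k) < eSuc n" "P (case_nat G Gs k) (case_nat G Gs (Suc k))"
      unfolding eventually_step_def by blast
    then show "P G (Gs 0) \<or> eventually_step (case_nat G Gs) (eSuc n) (Suc 0) P"
      unfolding eventually_step_def by (cases k) auto
  next
    assume "P G (Gs 0) \<or> eventually_step (case_nat G Gs) (eSuc n) (Suc 0) P"
    moreover have "enat (Suc 0) < eSuc n"
      using assms by (simp add: Suc_ile_eq zero_enat_def[symmetric])
    ultimately show "eventually_step (case_nat G Gs) (eSuc n) 0 P"
      unfolding eventually_step_def by force
  qed
  then show ?thesis
    by simp
qed

definition fair_at :: "(nat \<Rightarrow> ('p, 'l) env) \<Rightarrow> enat \<Rightarrow> nat \<Rightarrow> bool" where
  "fair_at Gs n i \<longleftrightarrow>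
     (\<forall>p q l G'. red (Gs i) (ASnd p q l) G' \<longrightarrow>
        eventually_step Gs n i (\<lambda>G G'. \<exists>l'. red G (ASnd p q l') G')) \<and>
     (\<forall>p q l G'. red (Gs i) (ARcv p q l) G' \<longrightarrow>
        eventually_step Gs n i (\<lambda>G G'. red G (ARcv p q l) G'))"

definition live_at :: "(nat \<Rightarrow> ('p, 'l) env) \<Rightarrow> enat \<Rightarrow> nat \<Rightarrow> bool" where
  "live_at Gs n i \<longleftrightarrow>
     (\<forall>p q l S \<sigma> T e. fmlookup (Gs i) p = Some e \<longrightarrow> eeq e ((q, l, S) # \<sigma>, T) \<longrightarrow>
        eventually_step Gs n i (\<lambda>G G'. red G (ARcv q p l) G')) \<and>
     (\<forall>p q \<sigma> m e. fmlookup (Gs i) p = Some e \<longrightarrow> eeq e (\<sigma>, Bra q m) \<longrightarrow> fmdom' m \<noteq> {} \<longrightarrow>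
        eventually_step Gs n i (\<lambda>G G'. \<exists>l'. red G (ARcv p q l') G'))"

lemma fair_path_iff_fair_at: "fair_path Gs n \<longleftrightarrow> (\<forall>i. enat i < n \<longrightarrow> fair_at Gs n i)"
  by (simp add: fair_path_def fair_at_def eventually_step_def)

lemma live_path_iff_live_at: "live_path Gs n \<longleftrightarrow> (\<forall>i. enat i < n \<longrightarrow> live_at Gs n i)"
  by (simp add: live_path_def live_at_def eventually_step_def)

lemma fair_at_prepend_Suc [simp]: "fair_at (case_nat G Gs) (eSuc n) (Suc i) \<longleftrightarrow> fair_at Gs n i"
  by (simp add: fair_at_def)

lemma live_at_prepend_Suc [simp]: "live_at (case_nat G Gs) (eSuc n) (Suc i) \<longleftrightarrow> live_at Gs n i"
  by (simp add: live_at_def)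

lemma fair_at_prepend_0:
  assumes step: "red G a (Gs 0)" and "n \<noteq> 0" and fair0: "fair_at Gs n 0"
  shows "fair_at (case_nat G Gs) (eSuc n) 0"
  unfolding fair_at_def eventually_step_prepend_0[OF \<open>n \<noteq> 0\<close>] nat.case(1)
proof (intro conjI allI impI)
  fix p q l G''
  assume sends: "red G (ASnd p q l) G''"
  show "(\<exists>l'. red G (ASnd p q l') (Gs 0)) \<or> eventually_step Gs n 0 (\<lambda>G G'. \<exists>l'. red G (ASnd p q l') G')"
  proof (cases "\<exists>l'. a = ASnd p q l'")
    case False
    have "send_enabled G p q l"
      using send_enabled_iff_red[OF red_wf_env_source[OF sends]] sends by blast
    with False have "send_enabled (Gs 0) p q l"
      using send_enabled_persists[OF step] by blast
    then obtain G3 where "red (Gs 0) (ASnd p q l) G3"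
      using send_enabled_iff_red[OF red_wf_env_target[OF step]] by blast
    with fair0 show ?thesis
      unfolding fair_at_def by blast
  qed (use step in blast)
next
  fix p q l G''
  assume receives: "red G (ARcv p q l) G''"
  show "red G (ARcv p q l) (Gs 0) \<or> eventually_step Gs n 0 (\<lambda>G G'. red G (ARcv p q l) G')"
  proof (cases "a = ARcv p q l")
    case False
    have "recv_enabled G p q l"
      using recv_enabled_iff_red[OF red_wf_env_source[OF receives]] receives by blast
    with False have "recv_enabled (Gs 0) p q l"
      using recv_enabled_persists[OF step] by blast
    then obtain G3 where "red (Gs 0) (ARcv p q l) G3"
      using recv_enabled_iff_red[OF red_wf_env_target[OF step]] by blast
    with fair0 show ?thesis
      unfolding fair_at_def by blast
  qed (use step in blast)
qed

lemma is_path_prepend: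
  assumes "red_any G (Gs 0)" and "is_path Gs n"
  shows "is_path (case_nat G Gs) (eSuc n)"
  using assms unfolding is_path_def by (auto simp: Suc_ile_eq split: nat.split)

lemma fair_path_prepend:
  assumes "red G a (Gs 0)" and "is_path Gs n" and "fair_path Gs n"
  shows "fair_path (case_nat G Gs) (eSuc n)"
  unfolding fair_path_iff_fair_at
proof (intro allI impI)
  fix i
  assume "enat i < eSuc n"
  have "n \<noteq> 0"
    using \<open>is_path Gs n\<close> by (simp add: is_path_def)
  have fair: "fair_at Gs n j" if "enat j < n" for j
    using assms(3) that by (simp add: fair_path_iff_fair_at)
  show "fair_at (case_nat G Gs) (eSuc n) i"
  proof (cases i)
    case 0
    with \<open>n \<noteq> 0\<close> show ?thesis
      using fair_at_prepend_0[of G a Gs n] assms(1) fair by (simp add: zero_enat_def[symmetric])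
  next
    case (Suc j)
    with \<open>enat i < eSuc n\<close> show ?thesis
      using fair by (simp add: Suc_ile_eq)
  qed
qed

lemma live_path_of_prepend:
  assumes "live_path (case_nat G Gs) (eSuc n)"
  shows "live_path Gs n"
  unfolding live_path_iff_live_at
proof (intro allI impI)
  fix i
  assume "enat i < n"
  then have "enat (Suc i) < eSuc n"
    by (simp add: Suc_ile_eq)
  with assms show "live_at Gs n i"
    unfolding live_path_iff_live_at by (metis live_at_prepend_Suc)
qed

theorem proposition4p6:
  fixes G G' :: "('p, 'l) env"
  assumes "live G"
    and "red_any G G'"
  shows "live G'"
  unfolding live_def
proof (intro allI impI)
  fix Gs n
  assume path: "is_path Gs n" and start: "Gs 0 = G'" and fair: "fair_path Gs n"
  from assms(2) obtain a where "red G a (Gs 0)"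
    unfolding red_any_def start by blast
  then have "live_path (case_nat G Gs) (eSuc n)"
    using assms(1) is_path_prepend[OF assms(2)[folded start] path] fair_path_prepend[OF _ path fair]
    unfolding live_def by simp
  then show "live_path Gs n"
    by (rule live_path_of_prepend)
qed

end
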